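(* Let $\Gamma$ be a connected signed graph on $N$ vertices. Then the flexibility $\tau(\Gamma)=N+1-c(\Gamma_+)-c(\Gamma_-)$ equals the dimension of the group of cycles of mixed type, i.e. the dimension of the real linear span of the vectors $v^\gamma=\partial(\gamma)\in\mathbb{R}^N$ as $\gamma$ ranges over the cycles of $\Gamma$ (equivalently, $\tau(\Gamma)=\dim\operatorname{im}(\partial)$).
   Context: A signed graph $\Gamma$ is a finite simple undirected graph with vertex set $\{1,\dots,N\}$ in which every edge carries a nonzero real weight, which may be of either sign. $\Gamma_+$ (resp. $\Gamma_-$) is the spanning subgraph on all vertices containing exactly the positively (resp. negatively) weighted edges; $c(H)$ is the number of connected components of $H$. For an oriented closed cycle $\gamma$ in $\Gamma$ (an element of $H_1(\Gamma)$, extended linearly), define $v^\gamma=\partial(\gamma)\in\mathbb{R}^N$ by: $v^\gamma_i$ increases by one each time $\gamma$ enters vertex $i$ through a negatively weighted edge and exits through a positively weighted edge, decreases by one each time $\gamma$ enters $i$ through a positively weighted edge and exits through a negatively weighted edge, and receives no other contributions (so $v^\gamma_i=0$ at vertices not on $\gamma$ or where $\gamma$ enters and exits through edges of the same sign). Cycles with $v^\gamma\neq 0$ are called cycles of mixed type. *)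

theory Defs
  imports "HOL-Analysis.Analysis"
begin

text \<open>A signed graph on the finite vertex type 'n (so N = CARD('n)) is given by a
  weight function w; there is an edge between i and j iff w i j \<noteq> 0.
  Simple undirected: w symmetric with zero diagonal.\<close>

definition signed_graph :: "('n \<Rightarrow> 'n \<Rightarrow> real) \<Rightarrow> bool" where
  "signed_graph w \<longleftrightarrow> (\<forall>i j. w i j = w j i) \<and> (\<forall>i. w i i = 0)"

definition edge_rel :: "('n \<Rightarrow> 'n \<Rightarrow> real) \<Rightarrow> ('n \<times> 'n) set" where
  "edge_rel w = {(i, j). w i j \<noteq> 0}"

definition pos_rel :: "('n \<Rightarrow> 'n \<Rightarrow> real) \<Rightarrow> ('n \<times> 'n) set" where
  "pos_rel w = {(i, j). w i j > 0}"

definition neg_rel :: "('n \<Rightarrow> 'n \<Rightarrow> real) \<Rightarrow> ('n \<times> 'n) set" where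
  "neg_rel w = {(i, j). w i j < 0}"

definition num_components :: "('n \<times> 'n) set \<Rightarrow> nat" where
  "num_components E = card (UNIV // (E\<^sup>*))"

definition connected_sg :: "('n \<Rightarrow> 'n \<Rightarrow> real) \<Rightarrow> bool" where
  "connected_sg w \<longleftrightarrow> (\<forall>i j. (i, j) \<in> (edge_rel w)\<^sup>*)"

text \<open>An oriented closed walk v_0, ..., v_(k-1), v_0 given by the cyclic list of its vertices.\<close>
definition closed_walk :: "('n \<Rightarrow> 'n \<Rightarrow> real) \<Rightarrow> 'n list \<Rightarrow> bool" where
  "closed_walk w vs \<longleftrightarrow> vs \<noteq> [] \<and>
     (\<forall>j < length vs. w (vs ! j) (vs ! ((j + 1) mod length vs)) \<noteq> 0)"

definition passage_contrib :: "('n \<Rightarrow> 'n \<Rightarrow> real) \<Rightarrow> 'n list \<Rightarrow> nat \<Rightarrow> real" where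
  "passage_contrib w vs j =
     (let k = length vs;
          win = w (vs ! ((j + k - 1) mod k)) (vs ! j);
          wout = w (vs ! j) (vs ! ((j + 1) mod k))
      in if win < 0 \<and> wout > 0 then 1 else if win > 0 \<and> wout < 0 then -1 else 0)"

definition mixed_vec :: "('n::finite \<Rightarrow> 'n \<Rightarrow> real) \<Rightarrow> 'n list \<Rightarrow> real ^ 'n" where
  "mixed_vec w vs = (\<chi> i. \<Sum>j \<in> {j. j < length vs \<and> vs ! j = i}. passage_contrib w vs j)"

end

theory Submission
  imports Defs
begin

text \<open>Let P and Q be the spans of the vectors e_a - e_b over the positive, resp. negative, edges.
  The orthogonal complement of such a span consists of the vectors that are constant on the
  components of the corresponding subgraph, so dim P = N - c(\<Gamma>_+), dim Q = N - c(\<Gamma>_-), and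
  P + Q, the span over all edges, has dimension N - 1 by connectivity.
  Counting passages edge by edge, v^\<gamma> is the sum of e_a - e_b over the positive edges (a, b)
  of \<gamma>; as the sum over all edges of a closed walk telescopes to 0, it is also minus the sum over
  the negative edges, hence lies in P \<inter> Q. Conversely, choose a walk from a root to each vertex u and let p(u) be the sum of its
  positive edge vectors. Every edge (a, b) closes up a walk with vector
  p(a) - p(b) + [w_ab > 0](e_a - e_b), and the linear map e_u \<mapsto> p(u) then shows that P \<inter> Q lies
  in the span of the v^\<gamma>. So that span is P \<inter> Q, of dimension
  dim P + dim Q - dim (P + Q) = N + 1 - c(\<Gamma>_+) - c(\<Gamma>_-).\<close>

definition edge_vec :: "'n::finite \<Rightarrow> 'n \<Rightarrow> real^'n" where
  "edge_vec a b = axis a 1 - axis b 1"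

definition incidence_span :: "('n::finite \<times> 'n) set \<Rightarrow> (real^'n) set" where
  "incidence_span E = span {edge_vec a b | a b. (a, b) \<in> E}"

definition indicator_vec :: "'n::finite set \<Rightarrow> real^'n" where
  "indicator_vec K = (\<chi> i. indicator K i)"

lemma edge_vec_swap: "edge_vec b a = - edge_vec a b"
  by (simp add: edge_vec_def)

lemma inner_edge_vec: "edge_vec a b \<bullet> y = y $ a - y $ b"
  by (simp add: edge_vec_def inner_diff_left inner_axis')

lemma subspace_incidence_span: "subspace (incidence_span E)"
  by (simp add: incidence_span_def)

lemma edge_vec_in_incidence_span: "(a, b) \<in> E \<Longrightarrow> edge_vec a b \<in> incidence_span E"
  unfolding incidence_span_def by (rule span_base) blast

lemma orthogonal_span_iff:
  "(\<forall>x \<in> span S. orthogonal x y) \<longleftrightarrow> (\<forall>x \<in> S. orthogonal x y)"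
proof
  assume "\<forall>x \<in> S. orthogonal x y"
  then show "\<forall>x \<in> span S. orthogonal x y"
    using orthogonal_to_span orthogonal_commute by blast
qed (simp add: span_base)

lemma orthogonal_incidence_span_iff:
  "(\<forall>x \<in> incidence_span E. orthogonal x y) \<longleftrightarrow> (\<forall>(a, b) \<in> E. y $ a = y $ b)"
  unfolding incidence_span_def orthogonal_span_iff
  by (force simp: orthogonal_def inner_edge_vec)

lemma edge_constant_iff_rtrancl_constant:
  "(\<forall>(a, b) \<in> E. y a = y b) \<longleftrightarrow> (\<forall>(a, b) \<in> E\<^sup>*. y a = y b)"
proof (intro iffI ballI, clarify)
  fix a b
  assume "(a, b) \<in> E\<^sup>*" "\<forall>(a, b) \<in> E. y a = y b"
  then show "y a = y b"
    by (induction rule: rtrancl_induct) auto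
qed auto

lemma in_quotient_iff_eq_class:
  assumes "equiv UNIV R" "K \<in> UNIV // R"
  shows "i \<in> K \<longleftrightarrow> K = R `` {i}"
  using assms by (metis UNIV_I equiv_class_self quotientE quotient_eq_iff quotientI)

lemma dim_class_constant_vectors:
  assumes R: "equiv UNIV R"
  shows "dim {y :: real^'n::finite. \<forall>(a, b) \<in> R. y $ a = y $ b} = card (UNIV // R)"
proof -
  let ?V = "{y :: real^'n. \<forall>(a, b) \<in> R. y $ a = y $ b}"
  let ?B = "indicator_vec ` (UNIV // R)"
  have class_iff: "K \<in> UNIV // R \<Longrightarrow> i \<in> K \<longleftrightarrow> K = R `` {i}" for K i
    by (rule in_quotient_iff_eq_class[OF R])
  have "?B \<subseteq> ?V"
    using R by (auto simp: indicator_vec_def indicator_def class_iff equiv_class_eq_iff)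
  moreover have "?V \<subseteq> span ?B"
  proof
    fix y assume y: "y \<in> ?V"
    define rep where "rep K = (SOME i. i \<in> K)" for K :: "'n set"
    have rep: "K \<in> UNIV // R \<Longrightarrow> rep K \<in> K" for K
      using in_quotient_imp_non_empty[OF R] unfolding rep_def by (simp add: some_in_eq)
    have "y = (\<Sum>K \<in> UNIV // R. y $ rep K *\<^sub>R indicator_vec K)"
    proof (subst vec_eq_iff, intro allI)
      fix i
      have "R `` {i} \<in> UNIV // R" by (rule quotientI) simp
      then have "(i, rep (R `` {i})) \<in> R" using rep by blast
      then have "y $ i = y $ rep (R `` {i})" using y by blast
      also have "\<dots> = (\<Sum>K \<in> UNIV // R. if K = R `` {i} then y $ rep K else 0)"
        using \<open>R `` {i} \<in> UNIV // R\<close> by simp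
      also have "\<dots> = (\<Sum>K \<in> UNIV // R. y $ rep K *\<^sub>R indicator_vec K) $ i"
        unfolding sum_component
        by (intro sum.cong) (auto simp: indicator_vec_def indicator_def class_iff)
      finally show "y $ i = (\<Sum>K \<in> UNIV // R. y $ rep K *\<^sub>R indicator_vec K) $ i" .
    qed
    also have "\<dots> \<in> span ?B"
      by (intro span_sum span_scale span_base imageI)
    finally show "y \<in> span ?B" .
  qed
  moreover have "independent ?B"
  proof (rule pairwise_orthogonal_independent)
    show "pairwise orthogonal ?B"
      using quotient_disj[OF R]
      by (fastforce simp: pairwise_def orthogonal_def inner_vec_def indicator_vec_def indicator_def
          intro!: sum.neutral)
    show "0 \<notin> ?B"
      using in_quotient_imp_non_empty[OF R]
      by (fastforce simp: indicator_vec_def vec_eq_iff indicator_def)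
  qed
  moreover have "inj_on indicator_vec (UNIV // R)"
    by (rule inj_onI) (simp add: indicator_vec_def vec_eq_iff indicator_def set_eq_iff of_bool_eq_iff)
  ultimately show ?thesis
    by (simp add: dim_unique card_image)
qed

lemma dim_incidence_span:
  fixes E :: "('n::finite \<times> 'n) set"
  assumes "sym E"
  shows "dim (incidence_span E) + num_components E = CARD('n)"
proof -
  have R: "equiv UNIV (E\<^sup>*)"
    using assms by (simp add: equiv_def refl_rtrancl sym_rtrancl trans_rtrancl)
  have "{y \<in> UNIV. \<forall>x \<in> incidence_span E. orthogonal x y} = {y. \<forall>(a, b) \<in> E\<^sup>*. y $ a = y $ b}"
    by (simp add: orthogonal_incidence_span_iff edge_constant_iff_rtrancl_constant[of E "vec_nth y" for y])
  moreover have "dim {y \<in> UNIV. \<forall>x \<in> incidence_span E. orthogonal x y} + dim (incidence_span E)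
      = dim (UNIV :: (real^'n) set)"
    by (rule dim_subspace_orthogonal_to_vectors) (simp_all add: subspace_incidence_span)
  ultimately show ?thesis
    by (simp add: dim_class_constant_vectors[OF R] num_components_def)
qed

lemma incidence_span_Un:
  "incidence_span (E \<union> F) = {x + y | x y. x \<in> incidence_span E \<and> y \<in> incidence_span F}"
proof -
  have "{edge_vec a b | a b. (a, b) \<in> E \<union> F}
      = {edge_vec a b | a b. (a, b) \<in> E} \<union> {edge_vec a b | a b. (a, b) \<in> F}"
    by blast
  then show ?thesis
    by (simp add: incidence_span_def span_Un)
qed

fun walk_sum :: "('n \<Rightarrow> 'n \<Rightarrow> 'a::comm_monoid_add) \<Rightarrow> 'n list \<Rightarrow> 'a" where
  "walk_sum f (a # b # xs) = f a b + walk_sum f (b # xs)"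
| "walk_sum f _ = 0"

lemma walk_sum_append:
  assumes "xs \<noteq> []" "ys \<noteq> []"
  shows "walk_sum f (xs @ ys) = walk_sum f xs + f (last xs) (hd ys) + walk_sum f ys"
  using assms
  by (induction xs rule: induct_list012) (auto simp: add_ac neq_Nil_conv)

lemma walk_sum_rev:
  fixes f :: "'n \<Rightarrow> 'n \<Rightarrow> 'a::ab_group_add"
  assumes "\<And>a b. f b a = - f a b"
  shows "walk_sum f (rev xs) = - walk_sum f xs"
proof (induction xs rule: induct_list012)
  case (3 a b xs)
  have "walk_sum f (rev (a # b # xs)) = walk_sum f (rev (b # xs) @ [a])"
    by simp
  also have "\<dots> = - walk_sum f (a # b # xs)"
    using 3(2) by (subst walk_sum_append) (simp_all add: assms[of a b])
  finally show ?case .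
qed simp_all

lemma walk_sum_add:
  "walk_sum (\<lambda>a b. f a b + g a b) xs = walk_sum f xs + walk_sum g xs"
  by (induction xs rule: induct_list012) (simp_all add: add_ac)

lemma walk_sum_cong:
  "successively (\<lambda>a b. f a b = g a b) xs \<Longrightarrow> walk_sum f xs = walk_sum g xs"
  by (induction xs rule: induct_list012) simp_all

lemma walk_sum_in_subspace:
  "subspace S \<Longrightarrow> (\<And>a b. f a b \<in> S) \<Longrightarrow> walk_sum f xs \<in> S"
  by (induction xs rule: induct_list012) (simp_all add: subspace_0 subspace_add)

lemma walk_sum_edge_vec:
  "xs \<noteq> [] \<Longrightarrow> walk_sum edge_vec xs = edge_vec (hd xs) (last xs)"
  by (induction xs rule: induct_list012) (auto simp: edge_vec_def)

lemma walk_sum_conv_nth: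
  "walk_sum f xs = (\<Sum>j < length xs - 1. f (xs ! j) (xs ! Suc j))"
proof (induction xs rule: induct_list012)
  case (3 a b xs)
  then show ?case
    by (simp add: sum.lessThan_Suc_shift del: sum.lessThan_Suc)
qed simp_all

lemma nth_append_hd:
  assumes "j < length vs"
  shows "(vs @ [hd vs]) ! j = vs ! j" "(vs @ [hd vs]) ! Suc j = vs ! ((j + 1) mod length vs)"
proof -
  show "(vs @ [hd vs]) ! j = vs ! j"
    using assms by (simp add: nth_append)
  show "(vs @ [hd vs]) ! Suc j = vs ! ((j + 1) mod length vs)"
  proof (cases "Suc j < length vs")
    case True
    then show ?thesis by (simp add: nth_append)
  next
    case False
    then have "Suc j = length vs" "vs \<noteq> []" using assms by auto
    then show ?thesis by (simp add: nth_append hd_conv_nth)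
  qed
qed

lemma walk_sum_closing:
  assumes "vs \<noteq> []"
  shows "walk_sum f (vs @ [hd vs]) = (\<Sum>j < length vs. f (vs ! j) (vs ! ((j + 1) mod length vs)))"
  by (simp add: walk_sum_conv_nth nth_append_hd)

lemma closed_walk_iff_successively:
  "closed_walk w vs \<longleftrightarrow> vs \<noteq> [] \<and> successively (\<lambda>a b. w a b \<noteq> 0) (vs @ [hd vs])"
  by (auto simp: closed_walk_def successively_conv_nth nth_append_hd)

lemma rtrancl_imp_walk:
  assumes "(a, b) \<in> E\<^sup>*"
  shows "\<exists>xs. xs \<noteq> [] \<and> hd xs = a \<and> last xs = b \<and> successively (\<lambda>x y. (x, y) \<in> E) xs"
  using assms
proof (induction rule: rtrancl_induct)
  case base
  show ?case by (intro exI[of _ "[a]"]) simp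
next
  case (step b c)
  then obtain xs where "xs \<noteq> []" "hd xs = a" "last xs = b" "successively (\<lambda>x y. (x, y) \<in> E) xs"
    by blast
  with step.hyps(2) show ?case
    by (intro exI[of _ "xs @ [c]"]) (simp add: successively_append_iff)
qed

definition pos_edge_vec :: "('n::finite \<Rightarrow> 'n \<Rightarrow> real) \<Rightarrow> 'n \<Rightarrow> 'n \<Rightarrow> real^'n" where
  "pos_edge_vec w a b = (if 0 < w a b then edge_vec a b else 0)"

definition neg_edge_vec :: "('n::finite \<Rightarrow> 'n \<Rightarrow> real) \<Rightarrow> 'n \<Rightarrow> 'n \<Rightarrow> real^'n" where
  "neg_edge_vec w a b = (if w a b < 0 then edge_vec a b else 0)"

lemma pos_edge_vec_in_incidence_span: "pos_edge_vec w a b \<in> incidence_span (pos_rel w)"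
  using edge_vec_in_incidence_span[of a b "pos_rel w"]
  by (simp add: pos_edge_vec_def pos_rel_def incidence_span_def span_zero)

lemma neg_edge_vec_in_incidence_span: "neg_edge_vec w a b \<in> incidence_span (neg_rel w)"
  using edge_vec_in_incidence_span[of a b "neg_rel w"]
  by (simp add: neg_edge_vec_def neg_rel_def incidence_span_def span_zero)

lemma pos_add_neg_edge_vec: "w a b \<noteq> 0 \<Longrightarrow> pos_edge_vec w a b + neg_edge_vec w a b = edge_vec a b"
  by (auto simp: pos_edge_vec_def neg_edge_vec_def)

lemma pos_edge_vec_swap: "w b a = w a b \<Longrightarrow> pos_edge_vec w b a = - pos_edge_vec w a b"
  by (simp add: pos_edge_vec_def edge_vec_swap[of a b])

lemma mod_succ_pred: "j < (k::nat) \<Longrightarrow> ((j + k - 1) mod k + 1) mod k = j"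
  by (metis add.commute add_diff_inverse_nat add_eq_0_iff_both_eq_0 less_one
      mod_add_left_eq mod_add_self1 mod_if not_gr_zero)

lemma mod_pred_succ: "j < (k::nat) \<Longrightarrow> ((j + 1) mod k + k - 1) mod k = j"
  using mod_if by auto

lemma mixed_vec_conv_sum:
  "mixed_vec w vs = (\<Sum>j < length vs. passage_contrib w vs j *\<^sub>R axis (vs ! j) 1)"
proof -
  have "mixed_vec w vs $ i = (\<Sum>j < length vs. passage_contrib w vs j *\<^sub>R axis (vs ! j) 1) $ i" for i
  proof -
    have "mixed_vec w vs $ i = (\<Sum>j \<in> {j \<in> {..<length vs}. vs ! j = i}. passage_contrib w vs j)"
      by (simp add: mixed_vec_def conj_commute)
    also have "\<dots> = (\<Sum>j < length vs. if vs ! j = i then passage_contrib w vs j else 0)"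
      by (rule sum.inter_filter) simp
    also have "\<dots> = (\<Sum>j < length vs. passage_contrib w vs j *\<^sub>R axis (vs ! j) 1) $ i"
      by (auto simp: axis_def intro: sum.cong)
    finally show ?thesis .
  qed
  then show ?thesis
    by (simp add: vec_eq_iff)
qed

lemma mixed_vec_eq_walk_sum:
  assumes "closed_walk w vs"
  shows "mixed_vec w vs = walk_sum (pos_edge_vec w) (vs @ [hd vs])"
proof -
  define k where "k = length vs"
  define succ where "succ j = (j + 1) mod k" for j
  define pred where "pred j = (j + k - 1) mod k" for j
  define out where "out j = w (vs ! j) (vs ! succ j)" for j
  have "vs \<noteq> []" using assms by (simp add: closed_walk_def)
  then have "0 < k" by (simp add: k_def)
  have out_nonzero: "j < k \<Longrightarrow> out j \<noteq> 0" for j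
    using assms by (simp add: closed_walk_def out_def succ_def k_def)
  have succ_pred: "j < k \<Longrightarrow> succ (pred j) = j" and pred_succ: "j < k \<Longrightarrow> pred (succ j) = j" for j
    unfolding succ_def pred_def by (simp_all only: mod_succ_pred mod_pred_succ)
  have range: "succ j < k" "pred j < k" for j
    using \<open>0 < k\<close> by (simp_all add: succ_def pred_def)
  \<comment> \<open>The passage through position j enters along edge pred j and leaves along edge j;
    both weights are nonzero, so it contributes [leaving edge positive] - [entering edge positive].\<close>
  have passage: "passage_contrib w vs j = of_bool (0 < out j) - of_bool (0 < out (pred j))"
    if "j < k" for j
  proof -
    have "out (pred j) = w (vs ! ((j + k - 1) mod k)) (vs ! j)"
      unfolding out_def succ_pred[OF that] by (simp add: pred_def)
    moreover have "out j = w (vs ! j) (vs ! ((j + 1) mod k))"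
      unfolding out_def succ_def ..
    ultimately show ?thesis
      using out_nonzero[OF that] out_nonzero[OF range(2)]
      by (auto simp: passage_contrib_def Let_def simp flip: k_def)
  qed
  have "(\<Sum>j<k. of_bool (0 < out (pred j)) *\<^sub>R axis (vs ! j) (1::real))
      = (\<Sum>j<k. of_bool (0 < out j) *\<^sub>R axis (vs ! succ j) 1)"
    by (rule sum.reindex_bij_witness[where i = succ and j = pred])
      (auto simp: succ_pred pred_succ range)
  then have "mixed_vec w vs = (\<Sum>j<k. of_bool (0 < out j) *\<^sub>R (axis (vs ! j) 1 - axis (vs ! succ j) 1))"
    by (simp add: mixed_vec_conv_sum passage scaleR_diff_left scaleR_diff_right sum_subtractf
        flip: k_def)
  also have "\<dots> = walk_sum (pos_edge_vec w) (vs @ [hd vs])"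
    unfolding walk_sum_closing[OF \<open>vs \<noteq> []\<close>]
    by (intro sum.cong) (simp_all add: pos_edge_vec_def edge_vec_def out_def succ_def k_def)
  finally show ?thesis .
qed

abbreviation mixed_span :: "('n::finite \<Rightarrow> 'n \<Rightarrow> real) \<Rightarrow> (real^'n) set" where
  "mixed_span w \<equiv> span {mixed_vec w vs | vs. closed_walk w vs}"

lemma mixed_vec_in_incidence_spans:
  assumes "closed_walk w vs"
  shows "mixed_vec w vs \<in> incidence_span (pos_rel w) \<inter> incidence_span (neg_rel w)"
proof -
  let ?xs = "vs @ [hd vs]"
  have "vs \<noteq> []" and walk: "successively (\<lambda>a b. w a b \<noteq> 0) ?xs"
    using assms by (simp_all add: closed_walk_iff_successively)
  have pos: "mixed_vec w vs = walk_sum (pos_edge_vec w) ?xs"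
    by (rule mixed_vec_eq_walk_sum[OF assms])
  have "walk_sum (pos_edge_vec w) ?xs + walk_sum (neg_edge_vec w) ?xs = walk_sum edge_vec ?xs"
    unfolding walk_sum_add[symmetric]
    by (rule walk_sum_cong) (use walk in \<open>auto elim: successively_mono simp: pos_add_neg_edge_vec\<close>)
  also have "\<dots> = 0"
    using \<open>vs \<noteq> []\<close> by (simp add: walk_sum_edge_vec edge_vec_def)
  finally have neg: "mixed_vec w vs = - walk_sum (neg_edge_vec w) ?xs"
    by (simp add: pos eq_neg_iff_add_eq_0)
  have "mixed_vec w vs \<in> incidence_span (pos_rel w)"
    unfolding pos
    by (intro walk_sum_in_subspace subspace_incidence_span pos_edge_vec_in_incidence_span)
  moreover have "mixed_vec w vs \<in> incidence_span (neg_rel w)"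
    unfolding neg
    by (intro subspace_neg walk_sum_in_subspace subspace_incidence_span neg_edge_vec_in_incidence_span)
  ultimately show ?thesis ..
qed

lemma walk_sum_closed_in_mixed_span:
  assumes "2 \<le> length xs" "hd xs = last xs" "successively (\<lambda>a b. w a b \<noteq> 0) xs"
  shows "walk_sum (pos_edge_vec w) xs \<in> mixed_span w"
proof -
  obtain x y ys where xs: "xs = x # y # ys"
    using assms(1) by (auto simp: numeral_2_eq_2 Suc_le_length_iff)
  define vs where "vs = butlast xs"
  have "vs \<noteq> []" "hd vs = hd xs"
    by (simp_all add: vs_def xs)
  have "xs = vs @ [last xs]"
    by (simp add: vs_def xs)
  then have xs: "xs = vs @ [hd vs]"
    using assms(2) \<open>hd vs = hd xs\<close> by simp
  then have "closed_walk w vs"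
    using \<open>vs \<noteq> []\<close> assms(3) by (simp add: closed_walk_iff_successively)
  then have "mixed_vec w vs \<in> mixed_span w"
    by (blast intro: span_base)
  then show ?thesis
    by (simp add: xs mixed_vec_eq_walk_sum[OF \<open>closed_walk w vs\<close>])
qed

lemma signed_graph_successively_flip:
  "signed_graph w \<Longrightarrow> successively (\<lambda>a b. w b a \<noteq> 0) xs \<longleftrightarrow> successively (\<lambda>a b. w a b \<noteq> 0) xs"
  by (simp add: signed_graph_def)

lemma exists_pos_potential:
  fixes w :: "'n::finite \<Rightarrow> 'n \<Rightarrow> real"
  assumes "signed_graph w" "connected_sg w"
  shows "\<exists>p. \<forall>a b. w a b \<noteq> 0 \<longrightarrow> p a - p b + pos_edge_vec w a b \<in> mixed_span w"
proof -
  fix r :: 'n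
  define walk_to where "walk_to u xs \<longleftrightarrow>
      xs \<noteq> [] \<and> hd xs = r \<and> last xs = u \<and> successively (\<lambda>a b. w a b \<noteq> 0) xs" for u xs
  define W where "W u = (SOME xs. walk_to u xs)" for u
  have "\<exists>xs. walk_to u xs" for u
    using rtrancl_imp_walk[of r u "edge_rel w"] assms(2)
    by (simp add: walk_to_def connected_sg_def edge_rel_def)
  then have W: "W u \<noteq> [] \<and> hd (W u) = r \<and> last (W u) = u \<and> successively (\<lambda>a b. w a b \<noteq> 0) (W u)"
    for u
    unfolding W_def by (metis someI_ex walk_to_def)
  define p where "p u = walk_sum (pos_edge_vec w) (W u)" for u
  have "p a - p b + pos_edge_vec w a b \<in> mixed_span w" if "w a b \<noteq> 0" for a b
  proof -
    let ?xs = "W a @ rev (W b)"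
    have swap: "pos_edge_vec w y x = - pos_edge_vec w x y" for x y
      by (rule pos_edge_vec_swap) (use assms(1) in \<open>simp add: signed_graph_def\<close>)
    have "walk_sum (pos_edge_vec w) ?xs = p a - p b + pos_edge_vec w a b"
      using W[of a] W[of b] by (simp add: walk_sum_append walk_sum_rev[OF swap] hd_rev p_def)
    moreover have "walk_sum (pos_edge_vec w) ?xs \<in> mixed_span w"
    proof (rule walk_sum_closed_in_mixed_span)
      show "2 \<le> length ?xs"
        using W[of a] W[of b] by (cases "W a"; cases "W b") auto
      show "hd ?xs = last ?xs" "successively (\<lambda>a b. w a b \<noteq> 0) ?xs"
        using W[of a] W[of b] that
        by (simp_all add: last_rev hd_rev successively_append_iff
            signed_graph_successively_flip[OF assms(1)])
    qed
    ultimately show ?thesis by simp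
  qed
  then show ?thesis by blast
qed

lemma incidence_spans_inter_subset_mixed_span:
  fixes w :: "'n::finite \<Rightarrow> 'n \<Rightarrow> real"
  assumes "signed_graph w" "connected_sg w"
  shows "incidence_span (pos_rel w) \<inter> incidence_span (neg_rel w) \<subseteq> mixed_span w"
proof
  obtain p where p: "\<And>a b. w a b \<noteq> 0 \<Longrightarrow> p a - p b + pos_edge_vec w a b \<in> mixed_span w"
    using exists_pos_potential[OF assms] by blast
  \<comment> \<open>On generators, x \<mapsto> L x + x lands in the mixed span for positive edges and L alone
    does for negative ones; so an x in both spans is the difference (L x + x) - L x.\<close>
  define L where "L y = (\<Sum>u\<in>UNIV. y $ u *\<^sub>R p u)" for y :: "real^'n"
  have "linear L"
    by (rule linearI) (simp_all add: L_def scaleR_add_left sum.distrib scaleR_sum_right)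
  have "L (axis a 1) = p a" for a
  proof -
    have "axis a 1 $ u *\<^sub>R p u = (if u = a then p u else 0)" for u
      by (simp add: axis_def)
    then show ?thesis
      by (simp add: L_def)
  qed
  then have L_edge_vec: "L (edge_vec a b) = p a - p b" for a b
    by (simp add: edge_vec_def linear_diff[OF \<open>linear L\<close>])
  have "incidence_span (pos_rel w) \<subseteq> (\<lambda>x. L x + x) -` mixed_span w"
    unfolding incidence_span_def
  proof (rule span_minimal)
    show "subspace ((\<lambda>x. L x + x) -` mixed_span w)"
      by (intro linear_subspace_vimage linear_compose_add \<open>linear L\<close> linear_ident subspace_span)
    show "{edge_vec a b | a b. (a, b) \<in> pos_rel w} \<subseteq> (\<lambda>x. L x + x) -` mixed_span w"
    proof (clarsimp simp: pos_rel_def)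
      fix a b :: 'n
      assume "0 < w a b"
      then show "L (edge_vec a b) + edge_vec a b \<in> mixed_span w"
        using p[of a b] by (simp add: L_edge_vec pos_edge_vec_def)
    qed
  qed
  moreover have "incidence_span (neg_rel w) \<subseteq> L -` mixed_span w"
    unfolding incidence_span_def
  proof (rule span_minimal)
    show "subspace (L -` mixed_span w)"
      by (intro linear_subspace_vimage \<open>linear L\<close> subspace_span)
    show "{edge_vec a b | a b. (a, b) \<in> neg_rel w} \<subseteq> L -` mixed_span w"
    proof (clarsimp simp: neg_rel_def)
      fix a b :: 'n
      assume "w a b < 0"
      then show "L (edge_vec a b) \<in> mixed_span w"
        using p[of a b] by (simp add: L_edge_vec pos_edge_vec_def)
    qed
  qed
  moreover fix x
  assume "x \<in> incidence_span (pos_rel w) \<inter> incidence_span (neg_rel w)"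
  ultimately have "(L x + x) - L x \<in> mixed_span w"
    by (blast intro: span_diff)
  then show "x \<in> mixed_span w"
    by simp
qed

lemma mixed_span_eq_incidence_spans_inter:
  assumes "signed_graph w" "connected_sg w"
  shows "mixed_span w = incidence_span (pos_rel w) \<inter> incidence_span (neg_rel w)"
proof
  show "mixed_span w \<subseteq> incidence_span (pos_rel w) \<inter> incidence_span (neg_rel w)"
    by (intro span_minimal subspace_inter subspace_incidence_span)
      (auto dest: mixed_vec_in_incidence_spans)
  show "incidence_span (pos_rel w) \<inter> incidence_span (neg_rel w) \<subseteq> mixed_span w"
    by (rule incidence_spans_inter_subset_mixed_span[OF assms])
qed

lemma edge_rel_eq_pos_rel_Un_neg_rel: "edge_rel w = pos_rel w \<union> neg_rel w"
  by (auto simp: edge_rel_def pos_rel_def neg_rel_def)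

lemma signed_graph_sym_rels:
  assumes "signed_graph w"
  shows "sym (pos_rel w)" "sym (neg_rel w)" "sym (edge_rel w)"
  using assms by (auto simp: sym_def signed_graph_def pos_rel_def neg_rel_def edge_rel_def)

lemma num_components_connected:
  fixes w :: "'n \<Rightarrow> 'n \<Rightarrow> real"
  assumes "connected_sg w"
  shows "num_components (edge_rel w) = 1"
proof -
  have "(edge_rel w)\<^sup>* = UNIV"
    using assms by (auto simp: connected_sg_def)
  moreover have "(UNIV :: 'n set) // UNIV = {UNIV}"
    by (auto simp: quotient_def)
  ultimately show ?thesis
    by (simp add: num_components_def)
qed

theorem mainTheorem7:
  fixes w :: "'n::finite \<Rightarrow> 'n \<Rightarrow> real"
  assumes "signed_graph w"
    and "connected_sg w"
  shows "int (dim (span {mixed_vec w vs | vs. closed_walk w vs}))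
         = int CARD('n) + 1 - int (num_components (pos_rel w)) - int (num_components (neg_rel w))"
proof -
  let ?P = "incidence_span (pos_rel w)" and ?Q = "incidence_span (neg_rel w)"
  have "dim (incidence_span (edge_rel w)) + dim (mixed_span w) = dim ?P + dim ?Q"
    using dim_sums_Int[OF subspace_incidence_span subspace_incidence_span, of "pos_rel w" "neg_rel w"]
    by (simp add: edge_rel_eq_pos_rel_Un_neg_rel incidence_span_Un
        mixed_span_eq_incidence_spans_inter[OF assms])
  moreover have "dim (incidence_span (edge_rel w)) + 1 = CARD('n)"
    using dim_incidence_span[OF signed_graph_sym_rels(3)[OF assms(1)]]
    by (simp add: num_components_connected[OF assms(2)])
  moreover have "dim ?P + num_components (pos_rel w) = CARD('n)"
    "dim ?Q + num_components (neg_rel w) = CARD('n)"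
    using dim_incidence_span signed_graph_sym_rels[OF assms(1)] by blast+
  ultimately show ?thesis
    by linarith
qed

end
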